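(* Let $G_c^w$ be an edge-coloured edge-weighted multi-graph (half-edge colouring $c$, edge weights $w$) which is g-GHZ. Then there is a weight function $w'$ on the edges such that $G_c^{w'}$ (same multi-graph, same half-edge colouring) is a GHZ graph with the same dimension as $G_c^w$.
   Context: Multi-graphs have no self-loops. Each edge $e$ between $u$ and $v$ consists of two half-edges $e_u$ and $e_v$. A half-edge colouring is a function $c$ from the set of half-edges to $\mathbb{N}_0$; each edge $e$ also gets a weight $w(e)\in\mathbb{C}$. The weight of a perfect matching $P$ is $\prod_{e\in P}w(e)$. A vertex colouring is a map $vc:V\to\mathbb{N}_0$; it filters out the subgraph consisting of all edges $e$ (between $u,v$) with $c(e_u)=vc(u)$ and $c(e_v)=vc(v)$ (with the same weights). The weight of $vc$ is the sum of the weights of all perfect matchings of this filtered subgraph; $vc$ is feasible if the filtered subgraph has at least one perfect matching (an infeasible colouring has weight $0$). The graph is GHZ if every feasible monochromatic vertex colouring has weight $1$ and every non-monochromatic vertex colouring has weight $0$. It is g-GHZ if every feasible monochromatic vertex colouring has non-zero weight and every non-monochromatic vertex colouring has weight $0$. In both cases the dimension is the number of feasible monochromatic vertex colourings. *)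

theory Defs
  imports Complex_Main "HOL-Library.FuncSet"
begin

text \<open>A multi-graph: finite vertex set V, finite edge set E (edges are elements of a
type 'e, so parallel edges are allowed), each edge e joining end1 e and end2 e.
The two half-edges of e are (e, end1 e) and (e, end2 e). A half-edge colouring is
c :: 'e => 'v => nat, the colour of half-edge (e,v) being c e v.\<close>

definition multigraph :: "'v set \<Rightarrow> 'e set \<Rightarrow> ('e \<Rightarrow> 'v) \<Rightarrow> ('e \<Rightarrow> 'v) \<Rightarrow> bool" where
  "multigraph V E end1 end2 \<longleftrightarrow> finite V \<and> finite E \<and>
     (\<forall>e\<in>E. end1 e \<in> V \<and> end2 e \<in> V \<and> end1 e \<noteq> end2 e)"

definition perfect_matchings :: "'v set \<Rightarrow> 'e set \<Rightarrow> ('e \<Rightarrow> 'v) \<Rightarrow> ('e \<Rightarrow> 'v) \<Rightarrow> 'e set set" where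
  "perfect_matchings V F end1 end2 =
     {M. M \<subseteq> F \<and> (\<forall>v\<in>V. \<exists>!e. e \<in> M \<and> (v = end1 e \<or> v = end2 e))}"

definition filtered_edges :: "'e set \<Rightarrow> ('e \<Rightarrow> 'v) \<Rightarrow> ('e \<Rightarrow> 'v) \<Rightarrow> ('e \<Rightarrow> 'v \<Rightarrow> nat) \<Rightarrow> ('v \<Rightarrow> nat) \<Rightarrow> 'e set" where
  "filtered_edges E end1 end2 c vc =
     {e \<in> E. c e (end1 e) = vc (end1 e) \<and> c e (end2 e) = vc (end2 e)}"

definition vc_weight :: "'v set \<Rightarrow> 'e set \<Rightarrow> ('e \<Rightarrow> 'v) \<Rightarrow> ('e \<Rightarrow> 'v) \<Rightarrow> ('e \<Rightarrow> 'v \<Rightarrow> nat)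
    \<Rightarrow> ('e \<Rightarrow> complex) \<Rightarrow> ('v \<Rightarrow> nat) \<Rightarrow> complex" where
  "vc_weight V E end1 end2 c w vc =
     (\<Sum>M\<in>perfect_matchings V (filtered_edges E end1 end2 c vc) end1 end2. \<Prod>e\<in>M. w e)"

definition feasible :: "'v set \<Rightarrow> 'e set \<Rightarrow> ('e \<Rightarrow> 'v) \<Rightarrow> ('e \<Rightarrow> 'v) \<Rightarrow> ('e \<Rightarrow> 'v \<Rightarrow> nat)
    \<Rightarrow> ('v \<Rightarrow> nat) \<Rightarrow> bool" where
  "feasible V E end1 end2 c vc \<longleftrightarrow>
     perfect_matchings V (filtered_edges E end1 end2 c vc) end1 end2 \<noteq> {}"

definition vertex_colourings :: "'v set \<Rightarrow> ('v \<Rightarrow> nat) set" where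
  "vertex_colourings V = V \<rightarrow>\<^sub>E UNIV"

definition monochromatic :: "'v set \<Rightarrow> ('v \<Rightarrow> nat) \<Rightarrow> bool" where
  "monochromatic V vc \<longleftrightarrow> (\<exists>k. \<forall>v\<in>V. vc v = k)"

definition is_GHZ :: "'v set \<Rightarrow> 'e set \<Rightarrow> ('e \<Rightarrow> 'v) \<Rightarrow> ('e \<Rightarrow> 'v) \<Rightarrow> ('e \<Rightarrow> 'v \<Rightarrow> nat)
    \<Rightarrow> ('e \<Rightarrow> complex) \<Rightarrow> bool" where
  "is_GHZ V E end1 end2 c w \<longleftrightarrow>
     (\<forall>vc\<in>vertex_colourings V.
        (monochromatic V vc \<and> feasible V E end1 end2 c vc \<longrightarrow> vc_weight V E end1 end2 c w vc = 1) \<and>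
        (\<not> monochromatic V vc \<longrightarrow> vc_weight V E end1 end2 c w vc = 0))"

definition is_gGHZ :: "'v set \<Rightarrow> 'e set \<Rightarrow> ('e \<Rightarrow> 'v) \<Rightarrow> ('e \<Rightarrow> 'v) \<Rightarrow> ('e \<Rightarrow> 'v \<Rightarrow> nat)
    \<Rightarrow> ('e \<Rightarrow> complex) \<Rightarrow> bool" where
  "is_gGHZ V E end1 end2 c w \<longleftrightarrow>
     (\<forall>vc\<in>vertex_colourings V.
        (monochromatic V vc \<and> feasible V E end1 end2 c vc \<longrightarrow> vc_weight V E end1 end2 c w vc \<noteq> 0) \<and>
        (\<not> monochromatic V vc \<longrightarrow> vc_weight V E end1 end2 c w vc = 0))"

text \<open>Dimension: number of feasible monochromatic vertex colourings (does not depend on w,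
but we keep w as an argument to match the paper's phrasing).\<close>
definition ghz_dimension :: "'v set \<Rightarrow> 'e set \<Rightarrow> ('e \<Rightarrow> 'v) \<Rightarrow> ('e \<Rightarrow> 'v) \<Rightarrow> ('e \<Rightarrow> 'v \<Rightarrow> nat)
    \<Rightarrow> ('e \<Rightarrow> complex) \<Rightarrow> nat" where
  "ghz_dimension V E end1 end2 c w =
     card {vc \<in> vertex_colourings V. monochromatic V vc \<and> feasible V E end1 end2 c vc}"

end

theory Submission
  imports Defs
begin

text \<open>Fix a vertex v0. Every perfect matching of a filtered subgraph contains exactly one edge
at v0, and the colour of its half-edge at v0 is the colour of v0. Dividing the weight of each
edge at v0 by the weight W(k) of the monochromatic colouring with colour k, where k is the
colour of its half-edge at v0, therefore divides the weight of every vertex colouring vc by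
W(vc v0). Non-monochromatic colourings keep weight 0 and feasible monochromatic ones get
weight 1; feasibility, and hence the dimension, does not depend on the weights.\<close>

definition rescale_at_vertex ::
    "('e \<Rightarrow> 'v) \<Rightarrow> ('e \<Rightarrow> 'v) \<Rightarrow> ('e \<Rightarrow> 'v \<Rightarrow> nat) \<Rightarrow> 'v \<Rightarrow> (nat \<Rightarrow> complex)
      \<Rightarrow> ('e \<Rightarrow> complex) \<Rightarrow> 'e \<Rightarrow> complex" where
  "rescale_at_vertex end1 end2 c v\<^sub>0 f w e =
     (if end1 e = v\<^sub>0 \<or> end2 e = v\<^sub>0 then f (c e v\<^sub>0) * w e else w e)"

lemma prod_scale_unique_factor:
  fixes g h :: "'a \<Rightarrow> 'b::comm_monoid_mult"
  assumes "finite M"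
    and "\<exists>!e. e \<in> M \<and> P e"
    and "\<And>e. e \<in> M \<Longrightarrow> P e \<Longrightarrow> g e = a * h e"
    and "\<And>e. e \<in> M \<Longrightarrow> \<not> P e \<Longrightarrow> g e = h e"
  shows "(\<Prod>e\<in>M. g e) = a * (\<Prod>e\<in>M. h e)"
proof -
  obtain e\<^sub>0 where e\<^sub>0: "e\<^sub>0 \<in> M" "P e\<^sub>0" and unique: "\<And>e. e \<in> M \<Longrightarrow> P e \<Longrightarrow> e = e\<^sub>0"
    using assms(2) by blast
  have rest: "(\<Prod>e\<in>M - {e\<^sub>0}. g e) = (\<Prod>e\<in>M - {e\<^sub>0}. h e)"
    using unique assms(4) by (intro prod.cong) auto
  have "(\<Prod>e\<in>M. g e) = g e\<^sub>0 * (\<Prod>e\<in>M - {e\<^sub>0}. g e)"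
    using assms(1) e\<^sub>0(1) by (simp add: prod.remove)
  also have "\<dots> = a * (h e\<^sub>0 * (\<Prod>e\<in>M - {e\<^sub>0}. h e))"
    using assms(3) e\<^sub>0 rest by (simp add: mult.assoc)
  also have "\<dots> = a * (\<Prod>e\<in>M. h e)"
    using assms(1) e\<^sub>0(1) by (simp add: prod.remove)
  finally show ?thesis .
qed

lemma filtered_edges_cong:
  assumes "multigraph V E end1 end2" and "\<And>v. v \<in> V \<Longrightarrow> vc v = vc' v"
  shows "filtered_edges E end1 end2 c vc = filtered_edges E end1 end2 c vc'"
  using assms unfolding multigraph_def filtered_edges_def by auto

lemma vc_weight_cong:
  assumes "multigraph V E end1 end2" and "\<And>v. v \<in> V \<Longrightarrow> vc v = vc' v"
  shows "vc_weight V E end1 end2 c w vc = vc_weight V E end1 end2 c w vc'"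
  unfolding vc_weight_def using filtered_edges_cong[OF assms] by simp

lemma vc_weight_rescale_at_vertex:
  assumes G: "multigraph V E end1 end2" and v\<^sub>0: "v\<^sub>0 \<in> V"
  shows "vc_weight V E end1 end2 c (rescale_at_vertex end1 end2 c v\<^sub>0 f w) vc
           = f (vc v\<^sub>0) * vc_weight V E end1 end2 c w vc"
proof -
  let ?w' = "rescale_at_vertex end1 end2 c v\<^sub>0 f w"
  have "(\<Prod>e\<in>M. ?w' e) = f (vc v\<^sub>0) * (\<Prod>e\<in>M. w e)"
    if M: "M \<in> perfect_matchings V (filtered_edges E end1 end2 c vc) end1 end2" for M
  proof (rule prod_scale_unique_factor[where P = "\<lambda>e. v\<^sub>0 = end1 e \<or> v\<^sub>0 = end2 e"])
    have "M \<subseteq> E"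
      using M unfolding perfect_matchings_def filtered_edges_def by auto
    then show "finite M"
      using G finite_subset unfolding multigraph_def by blast
    show "\<exists>!e. e \<in> M \<and> (v\<^sub>0 = end1 e \<or> v\<^sub>0 = end2 e)"
      using M v\<^sub>0 unfolding perfect_matchings_def by auto
    show "?w' e = f (vc v\<^sub>0) * w e" if "e \<in> M" "v\<^sub>0 = end1 e \<or> v\<^sub>0 = end2 e" for e
      using that M unfolding perfect_matchings_def filtered_edges_def rescale_at_vertex_def
      by auto
    show "?w' e = w e" if "\<not> (v\<^sub>0 = end1 e \<or> v\<^sub>0 = end2 e)" for e
      using that unfolding rescale_at_vertex_def by auto
  qed
  then show ?thesis
    unfolding vc_weight_def by (simp add: sum_distrib_left)
qed

lemma is_GHZ_no_vertices:
  assumes "multigraph {} E end1 end2"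
  shows "is_GHZ {} E end1 end2 c w"
proof -
  have "E = {}"
    using assms unfolding multigraph_def by auto
  then show ?thesis
    unfolding is_GHZ_def vc_weight_def perfect_matchings_def filtered_edges_def monochromatic_def
    by simp
qed

lemma is_GHZ_normalise_gGHZ:
  assumes G: "multigraph V E end1 end2" and gGHZ: "is_gGHZ V E end1 end2 c w"
    and v\<^sub>0: "v\<^sub>0 \<in> V"
  defines "W \<equiv> \<lambda>k. vc_weight V E end1 end2 c w (\<lambda>_. k)"
  shows "is_GHZ V E end1 end2 c (rescale_at_vertex end1 end2 c v\<^sub>0 (\<lambda>k. inverse (W k)) w)"
  unfolding is_GHZ_def vc_weight_rescale_at_vertex[OF G v\<^sub>0]
proof (intro ballI conjI impI)
  fix vc assume vc: "vc \<in> vertex_colourings V"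
  show "inverse (W (vc v\<^sub>0)) * vc_weight V E end1 end2 c w vc = 0"
    if "\<not> monochromatic V vc"
    using that gGHZ vc unfolding is_gGHZ_def by simp
  assume mono_feasible: "monochromatic V vc \<and> feasible V E end1 end2 c vc"
  then obtain k where "\<And>v. v \<in> V \<Longrightarrow> vc v = k"
    unfolding monochromatic_def by auto
  then have "W (vc v\<^sub>0) = vc_weight V E end1 end2 c w vc"
    unfolding W_def using vc_weight_cong[OF G] v\<^sub>0 by metis
  moreover have "vc_weight V E end1 end2 c w vc \<noteq> 0"
    using gGHZ vc mono_feasible unfolding is_gGHZ_def by blast
  ultimately show "inverse (W (vc v\<^sub>0)) * vc_weight V E end1 end2 c w vc = 1"
    by simp
qed

theorem lemma1:
  fixes V :: "'v set" and E :: "'e set" and end1 end2 :: "'e \<Rightarrow> 'v"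
    and c :: "'e \<Rightarrow> 'v \<Rightarrow> nat" and w :: "'e \<Rightarrow> complex"
  assumes "multigraph V E end1 end2"
    and "is_gGHZ V E end1 end2 c w"
  shows "\<exists>w' :: 'e \<Rightarrow> complex. is_GHZ V E end1 end2 c w' \<and>
           ghz_dimension V E end1 end2 c w' = ghz_dimension V E end1 end2 c w"
proof -
  have "\<exists>w'. is_GHZ V E end1 end2 c w'"
  proof (cases "V = {}")
    case True
    then show ?thesis
      using is_GHZ_no_vertices assms(1) by blast
  next
    case False
    then obtain v\<^sub>0 where "v\<^sub>0 \<in> V"
      by blast
    then show ?thesis
      using is_GHZ_normalise_gGHZ[OF assms] by blast
  qed
  moreover have "ghz_dimension V E end1 end2 c w' = ghz_dimension V E end1 end2 c w" for w'
    unfolding ghz_dimension_def ..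
  ultimately show ?thesis
    by blast
qed

end
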